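(* Let $\mathbf K$ be a commutative field, $p,q\in\mathbb N$, $A\in\mathbf K^{\mathcal M_{p\times q}}$, and $\mathcal A=\overline{A}^{rec}$. Then $$\dim\big(\overline{A}^{birec}\big)=\dim\big(\mathbf K[\rho_{\mathcal A}(\mathcal M_{p\times q})]\big),$$ where $\mathbf K[\rho_{\mathcal A}(\mathcal M_{p\times q})]\subset\mathrm{End}(\mathcal A)$ is the subalgebra generated by the restrictions to $\mathcal A$ of all shift maps. In particular $$\dim\big(\overline{A}^{rec}\big)\le\dim\big(\overline{A}^{birec}\big)\le\big(\dim\overline{A}^{rec}\big)^2$$ (dimensions in $\mathbb N\cup\{\infty\}$).
   Context: $\mathcal M_{p\times q}$ is the monoid of pairs $(U,W)$ of words of common length with $U$ over $\{0,\dots,p-1\}$ and $W$ over $\{0,\dots,q-1\}$, under concatenation. For $A:\mathcal M_{p\times q}\to\mathbf K$ (values $A[U,W]$), the (right) shift map is $(\rho(S,T)A)[U,W]=A[US,WT]$ and the left shift map is $(\lambda(s_1\dots s_n,t_1\dots t_n)A)[U,W]=A[s_n\dots s_1U,t_n\dots t_1W]$. The recursive closure $\overline{A}^{rec}$ is the linear span of $\{\rho(S,T)A\}$ (invariant under all shift maps), and the birecursive closure $\overline{A}^{birec}$ is the linear span of $\{\lambda(S',T')\rho(S,T)A:(S,T),(S',T')\in\mathcal M_{p\times q}\}$. *)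

theory Defs
  imports Main "HOL-Library.Extended_Nat" "HOL-Library.Function_Algebras"
begin

definition Mpq :: "nat \<Rightarrow> nat \<Rightarrow> (nat list \<times> nat list) set" where
  "Mpq p q = {(U, W). length U = length W \<and> set U \<subseteq> {..<p} \<and> set W \<subseteq> {..<q}}"

definition fscale :: "'k::field \<Rightarrow> ('a \<Rightarrow> 'k) \<Rightarrow> ('a \<Rightarrow> 'k)" where
  "fscale c f = (\<lambda>x. c * f x)"

definition mscale :: "'k::field \<Rightarrow> (('a \<Rightarrow> 'k) \<Rightarrow> ('b \<Rightarrow> 'k)) \<Rightarrow> (('a \<Rightarrow> 'k) \<Rightarrow> ('b \<Rightarrow> 'k))" where
  "mscale c \<phi> = (\<lambda>f. fscale c (\<phi> f))"

definition edim :: "('k::field \<Rightarrow> 'v::ab_group_add \<Rightarrow> 'v) \<Rightarrow> 'v set \<Rightarrow> enat" where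
  "edim scale S = (if \<exists>B. finite B \<and> module.span scale B = module.span scale S
                   then enat (vector_space.dim scale S) else \<infinity>)"

definition rshift :: "nat list \<Rightarrow> nat list \<Rightarrow> (nat list \<times> nat list \<Rightarrow> 'k) \<Rightarrow> (nat list \<times> nat list \<Rightarrow> 'k)" where
  "rshift S T A = (\<lambda>(U, W). A (U @ S, W @ T))"

definition lshift :: "nat list \<Rightarrow> nat list \<Rightarrow> (nat list \<times> nat list \<Rightarrow> 'k) \<Rightarrow> (nat list \<times> nat list \<Rightarrow> 'k)" where
  "lshift S T A = (\<lambda>(U, W). A (rev S @ U, rev T @ W))"

definition rec_closure :: "nat \<Rightarrow> nat \<Rightarrow> (nat list \<times> nat list \<Rightarrow> 'k::field) \<Rightarrow> (nat list \<times> nat list \<Rightarrow> 'k) set" where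
  "rec_closure p q A = module.span fscale {rshift S T A | S T. (S, T) \<in> Mpq p q}"

definition birec_closure :: "nat \<Rightarrow> nat \<Rightarrow> (nat list \<times> nat list \<Rightarrow> 'k::field) \<Rightarrow> (nat list \<times> nat list \<Rightarrow> 'k) set" where
  "birec_closure p q A = module.span fscale
     {lshift S' T' (rshift S T A) | S T S' T'. (S, T) \<in> Mpq p q \<and> (S', T') \<in> Mpq p q}"

text \<open>Restriction of a map to a subspace V (as an endomorphism of V; values
outside V are set to 0).\<close>
definition restr :: "('a \<Rightarrow> 'k::field) set \<Rightarrow> (('a \<Rightarrow> 'k) \<Rightarrow> ('a \<Rightarrow> 'k)) \<Rightarrow> (('a \<Rightarrow> 'k) \<Rightarrow> ('a \<Rightarrow> 'k))" where
  "restr V \<phi> = (\<lambda>f. if f \<in> V then \<phi> f else 0)"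

text \<open>Unital subalgebra of End(V) generated by a set G of endomorphisms of V:
the linear span of all finite products of elements of G (the empty product
being the identity of V).\<close>
definition gen_alg :: "('a \<Rightarrow> 'k::field) set \<Rightarrow> (('a \<Rightarrow> 'k) \<Rightarrow> ('a \<Rightarrow> 'k)) set
    \<Rightarrow> (('a \<Rightarrow> 'k) \<Rightarrow> ('a \<Rightarrow> 'k)) set" where
  "gen_alg V G = module.span mscale {foldr (\<circ>) fs (restr V id) | fs. set fs \<subseteq> G}"

definition shift_alg :: "nat \<Rightarrow> nat \<Rightarrow> (nat list \<times> nat list \<Rightarrow> 'k::field) set
    \<Rightarrow> ((nat list \<times> nat list \<Rightarrow> 'k) \<Rightarrow> (nat list \<times> nat list \<Rightarrow> 'k)) set" where
  "shift_alg p q V = gen_alg V {restr V (rshift S T) | S T. (S, T) \<in> Mpq p q}"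

end

theory Submission
  imports Defs
begin

text \<open>
  Consider the matrix with rows indexed by pairs \<open>(X, S)\<close>, columns indexed by \<open>U\<close>, all
  ranging over \<open>M\<^sub>p\<^sub>\<times>\<^sub>q\<close>, and entries \<open>A[XUS]\<close>. Its rows are the left shifts of
  the right shifts \<open>\<rho>(S) A\<close>, so they span the birecursive closure. Its column at \<open>U\<close>
  lists the values of the restricted shift \<open>\<rho>(U)\<close> on the vectors \<open>\<rho>(S) A\<close>; these span
  \<open>\<A>\<close> and hence determine any endomorphism of \<open>\<A>\<close>, so the columns span a copy of the
  span of the restricted shifts, which is \<open>\<K>[\<rho>\<^sub>\<A>(M)]\<close> because the restricted shifts
  are closed under composition. Row rank equals column rank, also for infinite matrices and
  with dimensions in \<open>\<nat> \<union> {\<infinity>}\<close>.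

  The lower bound holds because the right shifts of \<open>A\<close> are among the generators of the
  birecursive closure. For the upper bound, the matrix \<open>b[XU]\<close> of any \<open>b \<in> \<A>\<close> has the left
  shifts of \<open>b\<close> as rows and right shifts of \<open>b\<close>, which lie in \<open>\<A>\<close>, as columns; so the
  left shifts of each element of a basis of \<open>\<A>\<close> span at most \<open>dim \<A>\<close> dimensions, and
  together they span the birecursive closure.
\<close>

section \<open>Dimension with values in \<open>enat\<close>\<close>

lemma enat_leI: "(\<And>n. enat n \<le> a \<Longrightarrow> enat n \<le> b) \<Longrightarrow> a \<le> (b::enat)"
  by (metis Suc_ile_eq enat.exhaust linorder_not_less order_refl)

context vector_space begin

lemma edim_basis:
  assumes "B \<subseteq> S" "independent B" "S \<subseteq> span B"
  shows "edim scale S = (if finite B then enat (card B) else \<infinity>)"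
proof -
  have span_B: "span B = span S"
    using assms by (metis span_mono span_span subset_antisym span_minimal subspace_span)
  show ?thesis
  proof (cases "finite B")
    case True
    then show ?thesis
      using span_B dim_eq_card[OF span_B assms(2)] unfolding edim_def by auto
  next
    case False
    have "\<not> finite C" if "span C = span S" for C
      using independent_span_bound[of C B] assms(2) span_B that span_superset False by blast
    then show ?thesis
      using False unfolding edim_def by auto
  qed
qed

lemma edim_ge_iff:
  "enat n \<le> edim scale S \<longleftrightarrow> (\<exists>I\<subseteq>S. independent I \<and> finite I \<and> card I = n)"
proof -
  obtain B where B: "B \<subseteq> S" "independent B" "S \<subseteq> span B"
    using maximal_independent_subset by blast
  show ?thesis
  proof
    assume n: "enat n \<le> edim scale S"
    obtain I where I: "I \<subseteq> B" "finite I" "card I = n"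
    proof (cases "finite B")
      case True
      then show ?thesis
        using that n edim_basis[OF B]
        by (metis enat_ord_simps(1) finite_subset obtain_subset_with_card_n)
    next
      case False
      then show ?thesis
        using that infinite_arbitrarily_large[OF False, of n] by blast
    qed
    moreover have "independent I"
      using independent_mono[OF B(2) I(1)] .
    ultimately show "\<exists>I\<subseteq>S. independent I \<and> finite I \<and> card I = n"
      using B(1) by blast
  next
    assume "\<exists>I\<subseteq>S. independent I \<and> finite I \<and> card I = n"
    then obtain I where "I \<subseteq> S" "independent I" "card I = n" by blast
    then show "enat n \<le> edim scale S"
      using edim_basis[OF B] independent_span_bound[of B I] B(3) by auto
  qed
qed

lemma edim_span: "edim scale (span S) = edim scale S"
  unfolding edim_def by (simp add: span_span)

lemma edim_mono:
  assumes "S \<subseteq> span T"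
  shows "edim scale S \<le> edim scale T"
proof (rule enat_leI)
  fix n assume "enat n \<le> edim scale S"
  then have "enat n \<le> edim scale (span T)"
    using assms unfolding edim_ge_iff by blast
  then show "enat n \<le> edim scale T" by (simp add: edim_span)
qed

lemma edim_le_card:
  assumes "S \<subseteq> span D" "finite D"
  shows "edim scale S \<le> enat (card D)"
proof (rule enat_leI)
  fix n assume "enat n \<le> edim scale S"
  then obtain I where "I \<subseteq> span D" "independent I" "card I = n"
    using assms(1) unfolding edim_ge_iff by blast
  then show "enat n \<le> enat (card D)"
    using independent_span_bound[OF assms(2)] by auto
qed

lemma edim_enatE:
  assumes "edim scale S = enat k"
  obtains B where "B \<subseteq> S" "independent B" "S \<subseteq> span B" "finite B" "card B = k"
proof -
  obtain B where B: "B \<subseteq> S" "independent B" "S \<subseteq> span B"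
    using maximal_independent_subset by blast
  then show ?thesis
    using that edim_basis[OF B] assms by (metis enat.distinct(2) enat.inject)
qed

lemma edim_Un_le: "edim scale (S \<union> T) \<le> edim scale S + edim scale T"
proof (cases "edim scale S"; cases "edim scale T")
  fix k l assume k: "edim scale S = enat k" and l: "edim scale T = enat l"
  obtain B where B: "S \<subseteq> span B" "finite B" "card B = k"
    using edim_enatE[OF k] by blast
  obtain C where C: "T \<subseteq> span C" "finite C" "card C = l"
    using edim_enatE[OF l] by blast
  have "S \<union> T \<subseteq> span (B \<union> C)"
    using B(1) C(1) span_mono[of B "B \<union> C"] span_mono[of C "B \<union> C"] by blast
  then have "edim scale (S \<union> T) \<le> enat (card (B \<union> C))"
    using B(2) C(2) by (intro edim_le_card) auto
  also have "\<dots> \<le> enat (k + l)"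
    using card_Un_le[of B C] B(3) C(3) by simp
  finally show ?thesis using k l by simp
qed auto

lemma edim_UN_le:
  assumes "finite I"
  shows "edim scale (\<Union>i\<in>I. S i) \<le> (\<Sum>i\<in>I. edim scale (S i))"
  using assms
proof (induction I rule: finite_induct)
  case empty
  show ?case using edim_le_card[of "{}" "{}"] by (simp add: zero_enat_def)
next
  case (insert i I)
  then show ?case
    using edim_Un_le[of "S i" "\<Union>i\<in>I. S i"] by (auto intro: order_trans add_left_mono)
qed

end

context Vector_Spaces.linear begin

lemma independent_inj_imageD:
  assumes "vs2.independent (f ` I)" "inj_on f I"
  shows "vs1.independent I"
proof
  assume "vs1.dependent I"
  then obtain a where a: "a \<in> I" "a \<in> vs1.span (I - {a})"
    unfolding vs1.dependent_def by blast
  then have "f a \<in> vs2.span (f ` (I - {a}))"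
    by (simp add: span_image)
  also have "f ` (I - {a}) = f ` I - {f a}"
    using assms(2) a(1) by (simp add: inj_on_image_set_diff)
  finally show False
    using assms(1) a(1) unfolding vs2.dependent_def by blast
qed

lemma edim_image_le: "edim s2 (f ` S) \<le> edim s1 S"
proof (rule enat_leI)
  fix n assume "enat n \<le> edim s2 (f ` S)"
  then obtain J where J: "J \<subseteq> f ` S" "vs2.independent J" "finite J" "card J = n"
    using vs2.edim_ge_iff by meson
  then obtain I where I: "I \<subseteq> S" "inj_on f I" "J = f ` I"
    by (meson subset_image_inj)
  have "vs1.independent I"
    using independent_inj_imageD J(2) I(2,3) by blast
  moreover have "finite I" "card I = n"
    using J(3,4) I(2,3) finite_image_iff card_image by metis+
  ultimately show "enat n \<le> edim s1 S"
    using I(1) vs1.edim_ge_iff by blast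
qed

lemma edim_image_eq:
  assumes "inj_on f (vs1.span S)"
  shows "edim s2 (f ` S) = edim s1 S"
proof (rule antisym[OF edim_image_le enat_leI])
  fix n assume "enat n \<le> edim s1 S"
  then obtain I where I: "I \<subseteq> S" "vs1.independent I" "finite I" "card I = n"
    using vs1.edim_ge_iff by meson
  have inj: "inj_on f (vs1.span I)"
    using inj_on_subset[OF assms vs1.span_mono[OF I(1)]] .
  have "vs2.independent (f ` I)"
    using independent_injective_image[OF I(2) inj] .
  moreover have "card (f ` I) = n"
    using card_image[OF inj_on_subset[OF inj vs1.span_superset]] I(4) by simp
  moreover have "f ` I \<subseteq> f ` S" "finite (f ` I)"
    using I(1,3) by auto
  ultimately show "enat n \<le> edim s2 (f ` S)"
    using vs2.edim_ge_iff by blast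
qed

end

lemma vector_space_fscale: "vector_space (fscale :: 'k::field \<Rightarrow> ('a \<Rightarrow> 'k) \<Rightarrow> _)"
  unfolding vector_space_def fscale_def by (auto simp: fun_eq_iff algebra_simps)

lemma vector_space_mscale:
  "vector_space (mscale :: 'k::field \<Rightarrow> (('a \<Rightarrow> 'k) \<Rightarrow> ('b \<Rightarrow> 'k)) \<Rightarrow> _)"
  unfolding vector_space_def mscale_def fscale_def by (auto simp: fun_eq_iff algebra_simps)

interpretation fs: vector_space "fscale :: 'k::field \<Rightarrow> ('a \<Rightarrow> 'k) \<Rightarrow> ('a \<Rightarrow> 'k)"
  by (rule vector_space_fscale)

interpretation ms: vector_space "mscale :: 'k::field \<Rightarrow> (('a \<Rightarrow> 'k) \<Rightarrow> ('b \<Rightarrow> 'k)) \<Rightarrow> _"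
  by (rule vector_space_mscale)

lemma linear_fscale_iff:
  fixes f :: "('a \<Rightarrow> 'k::field) \<Rightarrow> ('b \<Rightarrow> 'k)"
  shows "Vector_Spaces.linear fscale fscale f \<longleftrightarrow>
    (\<forall>x y. f (x + y) = f x + f y) \<and> (\<forall>c x. f (fscale c x) = fscale c (f x))"
  unfolding linear_iff_module_hom module_hom_iff module_iff_vector_space
  using vector_space_fscale[where 'a='a] vector_space_fscale[where 'a='b] by blast

lemma linear_restr:
  "Vector_Spaces.linear mscale mscale (restr V :: (('a \<Rightarrow> 'k::field) \<Rightarrow> _) \<Rightarrow> _)"
  unfolding linear_iff_module_hom module_hom_iff module_iff_vector_space
  using vector_space_mscale by (auto simp: restr_def mscale_def fun_eq_iff)

lemma subspace_linear_maps:
  "ms.subspace {f :: ('a \<Rightarrow> 'k::field) \<Rightarrow> ('b \<Rightarrow> 'k). Vector_Spaces.linear fscale fscale f}"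
  unfolding ms.subspace_def linear_fscale_iff by (auto simp: mscale_def fscale_def algebra_simps)

lemma sum_fun_apply: "(\<Sum>a\<in>A. f a) x = (\<Sum>a\<in>A. f a x)"
  by (induction A rule: infinite_finite_induct) auto

lemma in_span_indicators:
  fixes f :: "'a \<Rightarrow> 'k::field"
  assumes "finite R" "\<And>r. r \<notin> R \<Longrightarrow> f r = 0"
  shows "f \<in> fs.span ((\<lambda>r0 r. if r = r0 then 1 else 0) ` R)"
proof -
  have "f = (\<Sum>r0\<in>R. fscale (f r0) (\<lambda>r. if r = r0 then 1 else 0))"
    using assms
    by (auto simp: fun_eq_iff fscale_def sum_fun_apply if_distrib[of "(*) _"] cong: if_cong)
  then show ?thesis
    by (metis (no_types, lifting) fs.span_base fs.span_scale fs.span_sum imageI)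
qed

section \<open>Row rank equals column rank\<close>

lemma edim_rows_le_card:
  fixes M :: "'r \<Rightarrow> 'c \<Rightarrow> 'k::field"
  assumes zero: "\<And>r c. r \<in> R \<Longrightarrow> c \<notin> C \<Longrightarrow> M r c = 0"
    and D: "finite D" "\<And>c. c \<in> C \<Longrightarrow> (\<lambda>r. M r c) \<in> fs.span D"
  shows "edim fscale (M ` R) \<le> enat (card D)"
proof -
  have "\<forall>c\<in>C. \<exists>u. (\<lambda>r. M r c) = (\<Sum>d\<in>D. fscale (u d) d)"
    using D fs.span_finite[OF D(1)] by blast
  then obtain u where u: "\<And>c. c \<in> C \<Longrightarrow> (\<lambda>r. M r c) = (\<Sum>d\<in>D. fscale (u c d) d)"
    by metis
  define a where "a d = (\<lambda>c. if c \<in> C then u c d else 0)" for d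
  have row: "M r = (\<Sum>d\<in>D. fscale (d r) (a d))" if "r \<in> R" for r
  proof
    fix c
    show "M r c = (\<Sum>d\<in>D. fscale (d r) (a d)) c"
    proof (cases "c \<in> C")
      case True
      then have "M r c = (\<Sum>d\<in>D. fscale (u c d) d) r"
        using u by metis
      then show ?thesis
        using True by (simp add: sum_fun_apply fscale_def a_def mult.commute)
    qed (use zero that in \<open>simp add: sum_fun_apply fscale_def a_def\<close>)
  qed
  have "M r \<in> fs.span (a ` D)" if "r \<in> R" for r
    unfolding row[OF that] by (intro fs.span_sum fs.span_scale fs.span_base imageI)
  then have "M ` R \<subseteq> fs.span (a ` D)"
    by blast
  then have "edim fscale (M ` R) \<le> enat (card (a ` D))"
    using D(1) by (intro fs.edim_le_card) auto
  also have "\<dots> \<le> enat (card D)"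
    using card_image_le[OF D(1)] by simp
  finally show ?thesis .
qed

lemma edim_rows_le_edim_cols:
  fixes M :: "'r \<Rightarrow> 'c \<Rightarrow> 'k::field"
  assumes zero: "\<And>r c. r \<in> R \<Longrightarrow> c \<notin> C \<Longrightarrow> M r c = 0"
  shows "edim fscale (M ` R) \<le> edim fscale ((\<lambda>c r. M r c) ` C)"
proof (rule enat_leI)
  fix n assume "enat n \<le> edim fscale (M ` R)"
  then obtain I where I: "I \<subseteq> M ` R" "fs.independent I" "finite I" "card I = n"
    using fs.edim_ge_iff by meson
  then obtain R0 where R0: "R0 \<subseteq> R" "finite R0" "I = M ` R0"
    by (meson finite_subset_image)
  define P where "P f = (\<lambda>r. if r \<in> R0 then f r else 0)" for f :: "'r \<Rightarrow> 'k"
  define \<delta> where "\<delta> r0 = (\<lambda>r. if r = r0 then 1 else (0::'k))" for r0 :: 'r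
  define M0 where "M0 r c = P (\<lambda>r. M r c) r" for r c
  \<comment> \<open>Projecting the columns onto the coordinates \<open>R0\<close> of the \<open>n\<close> independent rows keeps
    these rows and makes the column space finite-dimensional.\<close>
  have linear_P: "Vector_Spaces.linear fscale fscale P"
    by (auto simp: linear_fscale_iff P_def fscale_def)
  have cols0: "(\<lambda>c r. M0 r c) ` C = P ` (\<lambda>c r. M r c) ` C"
    by (auto simp: M0_def image_image)
  have "(\<lambda>c r. M0 r c) ` C \<subseteq> fs.span (\<delta> ` R0)"
  proof (rule image_subsetI)
    fix c
    show "(\<lambda>r. M0 r c) \<in> fs.span (\<delta> ` R0)"
      unfolding \<delta>_def by (rule in_span_indicators[OF R0(2)]) (simp add: M0_def P_def)
  qed
  then have "edim fscale ((\<lambda>c r. M0 r c) ` C) \<le> enat (card (\<delta> ` R0))"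
    using R0(2) by (intro fs.edim_le_card) simp_all
  then obtain k where k: "edim fscale ((\<lambda>c r. M0 r c) ` C) = enat k"
    using enat_ile by blast
  then obtain D where D: "(\<lambda>c r. M0 r c) ` C \<subseteq> fs.span D" "finite D" "card D = k"
    by (rule fs.edim_enatE)
  have "enat n \<le> edim fscale (M0 ` R0)"
    using I R0 fs.edim_ge_iff[of n "M0 ` R0"] by (auto simp: M0_def P_def)
  also have "\<dots> \<le> enat (card D)"
  proof (rule edim_rows_le_card[OF _ D(2)])
    show "M0 r c = 0" if "r \<in> R0" "c \<notin> C" for r c
      using zero R0(1) that by (auto simp: M0_def P_def)
    show "(\<lambda>r. M0 r c) \<in> fs.span D" if "c \<in> C" for c
      using D(1) that by blast
  qed
  also have "\<dots> = edim fscale (P ` (\<lambda>c r. M r c) ` C)"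
    using k D(3) cols0 by simp
  also have "\<dots> \<le> edim fscale ((\<lambda>c r. M r c) ` C)"
    by (rule linear.edim_image_le[OF linear_P])
  finally show "enat n \<le> edim fscale ((\<lambda>c r. M r c) ` C)" .
qed

lemma edim_rows_eq_edim_cols:
  fixes M :: "'r \<Rightarrow> 'c \<Rightarrow> 'k::field"
  assumes "\<And>r c. r \<notin> R \<or> c \<notin> C \<Longrightarrow> M r c = 0"
  shows "edim fscale (M ` R) = edim fscale ((\<lambda>c r. M r c) ` C)"
  using edim_rows_le_edim_cols[of R C M] edim_rows_le_edim_cols[of C R "\<lambda>c r. M r c"] assms
  by (simp add: antisym)

type_synonym word_pair = "nat list \<times> nat list"

lemma Mpq_Nil [simp]: "([], []) \<in> Mpq p q"
  by (simp add: Mpq_def)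

lemma Mpq_rev_iff [simp]: "(rev a, rev b) \<in> Mpq p q \<longleftrightarrow> (a, b) \<in> Mpq p q"
  by (simp add: Mpq_def)

lemma Mpq_append:
  "(a1, a2) \<in> Mpq p q \<Longrightarrow> (b1, b2) \<in> Mpq p q \<Longrightarrow> (a1 @ b1, a2 @ b2) \<in> Mpq p q"
  by (simp add: Mpq_def)

lemma Mpq_append_left_iff:
  "(a1, a2) \<in> Mpq p q \<Longrightarrow> (a1 @ b1, a2 @ b2) \<in> Mpq p q \<longleftrightarrow> (b1, b2) \<in> Mpq p q"
  by (auto simp: Mpq_def)

lemma Mpq_append_right_iff:
  "(b1, b2) \<in> Mpq p q \<Longrightarrow> (a1 @ b1, a2 @ b2) \<in> Mpq p q \<longleftrightarrow> (a1, a2) \<in> Mpq p q"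
  by (auto simp: Mpq_def)

lemma rshift_apply [simp]: "rshift S T f (U, W) = f (U @ S, W @ T)"
  by (simp add: rshift_def)

lemma lshift_apply [simp]: "lshift S T f (U, W) = f (rev S @ U, rev T @ W)"
  by (simp add: lshift_def)

lemma rshift_rshift: "rshift S T (rshift S' T' f) = rshift (S @ S') (T @ T') f"
  by (simp add: rshift_def fun_eq_iff)

lemma rshift_Nil [simp]: "rshift [] [] = id"
  by (simp add: rshift_def fun_eq_iff)

lemma lshift_Nil [simp]: "lshift [] [] f = f"
  by (simp add: lshift_def fun_eq_iff)

lemma linear_rshift:
  "Vector_Spaces.linear fscale fscale (rshift S T :: (word_pair \<Rightarrow> 'k::field) \<Rightarrow> _)"
  by (simp add: linear_fscale_iff rshift_def fscale_def fun_eq_iff)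

lemma linear_lshift:
  "Vector_Spaces.linear fscale fscale (lshift S T :: (word_pair \<Rightarrow> 'k::field) \<Rightarrow> _)"
  by (simp add: linear_fscale_iff lshift_def fscale_def fun_eq_iff)

definition right_orbit :: "nat \<Rightarrow> nat \<Rightarrow> (word_pair \<Rightarrow> 'k) \<Rightarrow> (word_pair \<Rightarrow> 'k) set" where
  "right_orbit p q b = {rshift S T b | S T. (S, T) \<in> Mpq p q}"

definition left_orbit :: "nat \<Rightarrow> nat \<Rightarrow> (word_pair \<Rightarrow> 'k) \<Rightarrow> (word_pair \<Rightarrow> 'k) set" where
  "left_orbit p q b = {lshift S T b | S T. (S, T) \<in> Mpq p q}"

lemma rec_closure_eq: "rec_closure p q A = fs.span (right_orbit p q A)"
  by (simp add: rec_closure_def right_orbit_def)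

lemma birec_closure_eq:
  "birec_closure p q A = fs.span (\<Union>a\<in>right_orbit p q A. left_orbit p q a)"
  unfolding birec_closure_def right_orbit_def left_orbit_def
  by (rule arg_cong[where f = fs.span]) blast

lemma right_orbit_subset_rec_closure: "right_orbit p q A \<subseteq> rec_closure p q A"
  unfolding rec_closure_eq by (rule fs.span_superset)

lemma rshift_in_rec_closure: "(S, T) \<in> Mpq p q \<Longrightarrow> rshift S T A \<in> rec_closure p q A"
  using right_orbit_subset_rec_closure unfolding right_orbit_def by blast

lemma rec_closure_closed_under_rshift:
  fixes A :: "word_pair \<Rightarrow> 'k::field"
  assumes "f \<in> rec_closure p q A" "(S, T) \<in> Mpq p q"
  shows "rshift S T f \<in> rec_closure p q A"
proof -
  interpret Vector_Spaces.linear fscale fscale "rshift S T :: (word_pair \<Rightarrow> 'k) \<Rightarrow> _"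
    by (rule linear_rshift)
  have "rshift S T ` right_orbit p q A \<subseteq> right_orbit p q A"
    using assms(2) unfolding right_orbit_def
    by (auto simp: rshift_rshift) (metis Mpq_append)
  then have "fs.span (rshift S T ` right_orbit p q A) \<subseteq> rec_closure p q A"
    unfolding rec_closure_eq by (rule fs.span_mono)
  moreover have "rshift S T f \<in> fs.span (rshift S T ` right_orbit p q A)"
    using assms(1) unfolding span_image rec_closure_eq by (rule imageI)
  ultimately show ?thesis
    by blast
qed

lemma rec_closure_vanishes:
  fixes A :: "word_pair \<Rightarrow> 'k::field"
  assumes "\<forall>x. x \<notin> Mpq p q \<longrightarrow> A x = 0" "f \<in> rec_closure p q A" "x \<notin> Mpq p q"
  shows "f x = 0"
proof -
  have "fs.subspace {f. \<forall>x. x \<notin> Mpq p q \<longrightarrow> f x = (0::'k)}"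
    by (simp add: fs.subspace_def fscale_def)
  moreover have "right_orbit p q A \<subseteq> {f. \<forall>x. x \<notin> Mpq p q \<longrightarrow> f x = 0}"
    using assms(1) by (auto simp: right_orbit_def Mpq_append_right_iff)
  ultimately show ?thesis
    using fs.span_minimal assms(2,3) unfolding rec_closure_eq by blast
qed

lemma right_orbit_vanishes:
  fixes A :: "word_pair \<Rightarrow> 'k::field"
  assumes "\<forall>x. x \<notin> Mpq p q \<longrightarrow> A x = 0" "(S, T) \<in> Mpq p q"
  shows "\<forall>x. x \<notin> Mpq p q \<longrightarrow> rshift S T A x = 0"
  using rec_closure_vanishes[OF assms(1) rshift_in_rec_closure[OF assms(2)]] by blast

section \<open>Hankel matrices\<close>

definition hankel ::
  "nat \<Rightarrow> nat \<Rightarrow> (word_pair \<Rightarrow> 'k::zero) \<Rightarrow> word_pair \<Rightarrow> word_pair \<Rightarrow> 'k" where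
  "hankel p q b X U =
     (if X \<in> Mpq p q \<and> U \<in> Mpq p q then b (fst X @ fst U, snd X @ snd U) else 0)"

lemma hankel_row:
  assumes "\<forall>x. x \<notin> Mpq p q \<longrightarrow> b x = 0" "(X1, X2) \<in> Mpq p q"
  shows "hankel p q b (X1, X2) = lshift (rev X1) (rev X2) b"
proof
  fix U :: word_pair
  show "hankel p q b (X1, X2) U = lshift (rev X1) (rev X2) b U"
    using assms Mpq_append_left_iff[OF assms(2), of "fst U" "snd U"]
    by (cases U) (auto simp: hankel_def)
qed

lemma hankel_col:
  assumes "\<forall>x. x \<notin> Mpq p q \<longrightarrow> b x = 0" "(U1, U2) \<in> Mpq p q"
  shows "(\<lambda>X. hankel p q b X (U1, U2)) = rshift U1 U2 b"
proof
  fix X :: word_pair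
  show "hankel p q b X (U1, U2) = rshift U1 U2 b X"
    using assms Mpq_append_right_iff[OF assms(2), of "fst X" "snd X"]
    by (cases X) (auto simp: hankel_def)
qed

lemma left_orbit_eq_hankel_rows:
  assumes "\<forall>x. x \<notin> Mpq p q \<longrightarrow> b x = 0"
  shows "left_orbit p q b = hankel p q b ` Mpq p q"
proof
  show "left_orbit p q b \<subseteq> hankel p q b ` Mpq p q"
  proof
    fix g assume "g \<in> left_orbit p q b"
    then obtain S T where "(S, T) \<in> Mpq p q" "g = lshift S T b"
      by (auto simp: left_orbit_def)
    then have "(rev S, rev T) \<in> Mpq p q" "g = hankel p q b (rev S, rev T)"
      using hankel_row[OF assms, of "rev S" "rev T"] by simp_all
    then show "g \<in> hankel p q b ` Mpq p q"
      by blast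
  qed
  show "hankel p q b ` Mpq p q \<subseteq> left_orbit p q b"
    using hankel_row[OF assms] by (force simp: left_orbit_def)
qed

lemma right_orbit_eq_hankel_cols:
  assumes "\<forall>x. x \<notin> Mpq p q \<longrightarrow> b x = 0"
  shows "right_orbit p q b = (\<lambda>U X. hankel p q b X U) ` Mpq p q"
proof -
  have "right_orbit p q b = (\<lambda>(U1, U2). rshift U1 U2 b) ` Mpq p q"
    by (auto simp: right_orbit_def)
  also have "\<dots> = (\<lambda>U X. hankel p q b X U) ` Mpq p q"
    using hankel_col[OF assms] by (intro image_cong) auto
  finally show ?thesis .
qed

lemma hankel_outside: "X \<notin> Mpq p q \<or> U \<notin> Mpq p q \<Longrightarrow> hankel p q b X U = 0"
  by (auto simp: hankel_def)

lemma edim_left_orbit_eq_right_orbit: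
  fixes b :: "word_pair \<Rightarrow> 'k::field"
  assumes "\<forall>x. x \<notin> Mpq p q \<longrightarrow> b x = 0"
  shows "edim fscale (left_orbit p q b) = edim fscale (right_orbit p q b)"
  unfolding left_orbit_eq_hankel_rows[OF assms] right_orbit_eq_hankel_cols[OF assms]
  using hankel_outside by (rule edim_rows_eq_edim_cols)

lemma edim_left_orbit_le_rec_closure:
  fixes A :: "word_pair \<Rightarrow> 'k::field"
  assumes "\<forall>x. x \<notin> Mpq p q \<longrightarrow> A x = 0" "b \<in> rec_closure p q A"
  shows "edim fscale (left_orbit p q b) \<le> edim fscale (rec_closure p q A)"
proof -
  have "right_orbit p q b \<subseteq> rec_closure p q A"
    using rec_closure_closed_under_rshift[OF assms(2)] by (auto simp: right_orbit_def)
  then have "edim fscale (right_orbit p q b) \<le> edim fscale (rec_closure p q A)"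
    using fs.span_superset by (intro fs.edim_mono) blast
  moreover have "\<forall>x. x \<notin> Mpq p q \<longrightarrow> b x = 0"
    using rec_closure_vanishes[OF assms] by blast
  ultimately show ?thesis
    by (simp add: edim_left_orbit_eq_right_orbit)
qed

lemma edim_rec_closure_le_birec_closure:
  fixes A :: "word_pair \<Rightarrow> 'k::field"
  shows "edim fscale (rec_closure p q A) \<le> edim fscale (birec_closure p q A)"
proof -
  have "a \<in> left_orbit p q a" for a :: "word_pair \<Rightarrow> 'k"
    unfolding left_orbit_def by (intro CollectI exI[of _ "[]"]) simp
  then have "right_orbit p q A \<subseteq> (\<Union>a\<in>right_orbit p q A. left_orbit p q a)"
    by blast
  then show ?thesis
    unfolding rec_closure_eq birec_closure_eq fs.edim_span
    using fs.span_superset by (intro fs.edim_mono) blast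
qed

lemma edim_birec_closure_le_square:
  fixes A :: "word_pair \<Rightarrow> 'k::field"
  assumes "\<forall>x. x \<notin> Mpq p q \<longrightarrow> A x = 0"
  shows "edim fscale (birec_closure p q A)
    \<le> edim fscale (rec_closure p q A) * edim fscale (rec_closure p q A)"
proof (cases "edim fscale (rec_closure p q A)")
  case (enat k)
  then obtain D where D: "D \<subseteq> rec_closure p q A" "rec_closure p q A \<subseteq> fs.span D"
    "finite D" "card D = k"
    by (rule fs.edim_enatE)
  have "left_orbit p q a \<subseteq> fs.span (\<Union>b\<in>D. left_orbit p q b)"
    if "a \<in> right_orbit p q A" for a
  proof
    fix g assume "g \<in> left_orbit p q a"
    then obtain S T where ST: "(S, T) \<in> Mpq p q" "g = lshift S T a"
      by (auto simp: left_orbit_def)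
    interpret Vector_Spaces.linear fscale fscale "lshift S T :: (word_pair \<Rightarrow> 'k) \<Rightarrow> _"
      by (rule linear_lshift)
    have "a \<in> fs.span D"
      using that right_orbit_subset_rec_closure D(2) by blast
    then have "g \<in> fs.span (lshift S T ` D)"
      unfolding span_image ST(2) by (rule imageI)
    moreover have "lshift S T ` D \<subseteq> (\<Union>b\<in>D. left_orbit p q b)"
      using ST(1) by (auto simp: left_orbit_def)
    ultimately show "g \<in> fs.span (\<Union>b\<in>D. left_orbit p q b)"
      using fs.span_mono by blast
  qed
  then have "edim fscale (birec_closure p q A) \<le> edim fscale (\<Union>b\<in>D. left_orbit p q b)"
    unfolding birec_closure_eq fs.edim_span by (intro fs.edim_mono) blast
  also have "\<dots> \<le> (\<Sum>b\<in>D. edim fscale (left_orbit p q b))"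
    using D(3) by (rule fs.edim_UN_le)
  also have "\<dots> \<le> (\<Sum>b\<in>D. edim fscale (rec_closure p q A))"
    using edim_left_orbit_le_rec_closure[OF assms] D(1) by (intro sum_mono) blast
  also have "\<dots> = edim fscale (rec_closure p q A) * edim fscale (rec_closure p q A)"
    using D(4) enat by (simp add: of_nat_eq_enat)
  finally show ?thesis .
qed simp

section \<open>The shift algebra\<close>

lemma foldr_comp_set_eq:
  assumes "e \<in> G" "\<And>g h. g \<in> G \<Longrightarrow> h \<in> G \<Longrightarrow> g \<circ> h \<in> G" "\<And>g. g \<in> G \<Longrightarrow> g \<circ> e = g"
  shows "{foldr (\<circ>) fs e | fs. set fs \<subseteq> G} = G"
proof
  have "foldr (\<circ>) fs e \<in> G" if "set fs \<subseteq> G" for fs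
    using that by (induction fs) (use assms in auto)
  then show "{foldr (\<circ>) fs e | fs. set fs \<subseteq> G} \<subseteq> G"
    by blast
  show "G \<subseteq> {foldr (\<circ>) fs e | fs. set fs \<subseteq> G}"
  proof
    fix g assume "g \<in> G"
    then have "g = foldr (\<circ>) [g] e" "set [g] \<subseteq> G"
      using assms(3) by simp_all
    then show "g \<in> {foldr (\<circ>) fs e | fs. set fs \<subseteq> G}"
      by blast
  qed
qed

lemma restr_rshift_comp:
  fixes A :: "word_pair \<Rightarrow> 'k::field"
  assumes "(S', T') \<in> Mpq p q"
  shows "restr (rec_closure p q A) (rshift S T) \<circ> restr (rec_closure p q A) (rshift S' T')
    = restr (rec_closure p q A) (rshift (S @ S') (T @ T'))"
  using rec_closure_closed_under_rshift[OF _ assms] by (auto simp: restr_def fun_eq_iff rshift_rshift)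

definition shift_maps :: "nat \<Rightarrow> nat \<Rightarrow> ((word_pair \<Rightarrow> 'k) \<Rightarrow> (word_pair \<Rightarrow> 'k)) set" where
  "shift_maps p q = {rshift S T | S T. (S, T) \<in> Mpq p q}"

lemma shift_alg_eq:
  fixes p q :: nat and A :: "word_pair \<Rightarrow> 'k::field"
  defines "V \<equiv> rec_closure p q A"
  shows "shift_alg p q V = ms.span (restr V ` shift_maps p q)"
proof -
  have gens: "{restr V (rshift S T) | S T. (S, T) \<in> Mpq p q} = restr V ` shift_maps p q"
    by (auto simp: shift_maps_def)
  have comp: "restr V (rshift S T) \<circ> restr V (rshift S' T') \<in> restr V ` shift_maps p q"
    if "(S, T) \<in> Mpq p q" "(S', T') \<in> Mpq p q" for S T S' T'
    using that by (auto simp: V_def restr_rshift_comp shift_maps_def intro: Mpq_append)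
  have "{foldr (\<circ>) fs (restr V id) | fs. set fs \<subseteq> restr V ` shift_maps p q}
      = restr V ` shift_maps p q"
  proof (rule foldr_comp_set_eq)
    show "restr V id \<in> restr V ` shift_maps p q"
      unfolding shift_maps_def by (intro imageI CollectI exI[of _ "[]"]) (simp add: id_def)
    show "g \<circ> h \<in> restr V ` shift_maps p q"
      if "g \<in> restr V ` shift_maps p q" "h \<in> restr V ` shift_maps p q" for g h
      using that comp by (auto simp: shift_maps_def)
    show "g \<circ> restr V id = g" if "g \<in> restr V ` shift_maps p q" for g
      using that restr_rshift_comp[OF Mpq_Nil] by (auto simp: V_def shift_maps_def)
  qed
  then show ?thesis
    unfolding shift_alg_def gen_alg_def gens by simp
qed

definition eval_on_orbit :: "nat \<Rightarrow> nat \<Rightarrow> (word_pair \<Rightarrow> 'k::field)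
    \<Rightarrow> ((word_pair \<Rightarrow> 'k) \<Rightarrow> (word_pair \<Rightarrow> 'k)) \<Rightarrow> (word_pair \<times> word_pair \<Rightarrow> 'k)"
  where "eval_on_orbit p q A f =
    (\<lambda>(X, S). if S \<in> Mpq p q then f (rshift (fst S) (snd S) A) X else 0)"

lemma linear_eval_on_orbit: "Vector_Spaces.linear mscale fscale (eval_on_orbit p q A)"
  unfolding linear_iff_module_hom module_hom_iff module_iff_vector_space
  using vector_space_mscale vector_space_fscale
  by (auto simp: eval_on_orbit_def mscale_def fscale_def fun_eq_iff)

lemma inj_on_eval_on_orbit:
  fixes p q :: nat and A :: "word_pair \<Rightarrow> 'k::field"
  defines "V \<equiv> rec_closure p q A"
  shows "inj_on (eval_on_orbit p q A) (shift_alg p q V)"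
proof -
  interpret E: Vector_Spaces.linear mscale fscale "eval_on_orbit p q A"
    by (rule linear_eval_on_orbit)
  interpret R: Vector_Spaces.linear mscale mscale "restr V"
    by (rule linear_restr)
  have alg: "shift_alg p q V = ms.span (restr V ` shift_maps p q)"
    unfolding V_def by (rule shift_alg_eq)
  have "shift_maps p q \<subseteq> {f. Vector_Spaces.linear fscale fscale f}"
    using linear_rshift by (auto simp: shift_maps_def)
  then have linear_span:
    "ms.span (shift_maps p q) \<subseteq> {f. Vector_Spaces.linear fscale fscale f}"
    using subspace_linear_maps by (rule ms.span_minimal)
  show ?thesis
    unfolding alg E.inj_on_iff_eq_0[OF ms.subspace_span]
  proof (intro ballI impI)
    fix g assume "g \<in> ms.span (restr V ` shift_maps p q)" "eval_on_orbit p q A g = 0"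
    then obtain f where f: "f \<in> ms.span (shift_maps p q)" "g = restr V f"
      unfolding R.span_image by blast
    interpret F: Vector_Spaces.linear fscale fscale f
      using linear_span f(1) by blast
    have "f a = 0" if a: "a \<in> right_orbit p q A" for a
    proof -
      obtain S T where ST: "(S, T) \<in> Mpq p q" "a = rshift S T A"
        using a by (auto simp: right_orbit_def)
      have "a \<in> V"
        using a right_orbit_subset_rec_closure V_def by blast
      then have "eval_on_orbit p q A g (X, (S, T)) = f a X" for X
        using ST by (simp add: eval_on_orbit_def restr_def f(2))
      then show "f a = 0"
        using \<open>eval_on_orbit p q A g = 0\<close> by (auto simp: fun_eq_iff)
    qed
    then have "f x = 0" if "x \<in> V" for x
      using F.eq_0_on_span that unfolding V_def rec_closure_eq by blast
    then show "g = 0"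
      unfolding f(2) restr_def by (auto simp: fun_eq_iff)
  qed
qed

definition orbit_matrix ::
  "nat \<Rightarrow> nat \<Rightarrow> (word_pair \<Rightarrow> 'k::zero) \<Rightarrow> word_pair \<times> word_pair \<Rightarrow> word_pair \<Rightarrow> 'k"
  where "orbit_matrix p q A =
    (\<lambda>(X, S) U. if S \<in> Mpq p q then hankel p q (rshift (fst S) (snd S) A) X U else 0)"

lemma orbit_matrix_rows:
  fixes A :: "word_pair \<Rightarrow> 'k::field"
  assumes "\<forall>x. x \<notin> Mpq p q \<longrightarrow> A x = 0"
  shows "orbit_matrix p q A ` (Mpq p q \<times> Mpq p q)
    = (\<Union>a\<in>right_orbit p q A. left_orbit p q a)"
proof -
  have "orbit_matrix p q A ` (Mpq p q \<times> Mpq p q)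
      = (\<Union>(S, T)\<in>Mpq p q. hankel p q (rshift S T A) ` Mpq p q)"
    by (force simp: orbit_matrix_def)
  also have "\<dots> = (\<Union>(S, T)\<in>Mpq p q. left_orbit p q (rshift S T A))"
    using left_orbit_eq_hankel_rows[OF right_orbit_vanishes[OF assms]] by auto
  also have "\<dots> = (\<Union>a\<in>right_orbit p q A. left_orbit p q a)"
    by (auto simp: right_orbit_def)
  finally show ?thesis .
qed

lemma orbit_matrix_col:
  fixes p q :: nat and A :: "word_pair \<Rightarrow> 'k::field"
  defines "V \<equiv> rec_closure p q A"
  assumes "\<forall>x. x \<notin> Mpq p q \<longrightarrow> A x = 0" "(U1, U2) \<in> Mpq p q"
  shows "(\<lambda>r. orbit_matrix p q A r (U1, U2)) = eval_on_orbit p q A (restr V (rshift U1 U2))"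
proof
  fix r :: "word_pair \<times> word_pair"
  obtain X S T where r: "r = (X, (S, T))"
    by (metis prod.exhaust)
  show "orbit_matrix p q A r (U1, U2) = eval_on_orbit p q A (restr V (rshift U1 U2)) r"
  proof (cases "(S, T) \<in> Mpq p q")
    case True
    have "orbit_matrix p q A r (U1, U2) = hankel p q (rshift S T A) X (U1, U2)"
      using True by (simp add: r orbit_matrix_def)
    also have "\<dots> = rshift U1 U2 (rshift S T A) X"
      using fun_cong[OF hankel_col[OF right_orbit_vanishes[OF assms(2) True] assms(3)], of X]
      by simp
    also have "\<dots> = eval_on_orbit p q A (restr V (rshift U1 U2)) r"
      using True rshift_in_rec_closure[OF True, of A]
      by (simp add: r V_def eval_on_orbit_def restr_def)
    finally show ?thesis .
  qed (simp add: r orbit_matrix_def eval_on_orbit_def)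
qed

lemma orbit_matrix_cols:
  fixes p q :: nat and A :: "word_pair \<Rightarrow> 'k::field"
  defines "V \<equiv> rec_closure p q A"
  assumes "\<forall>x. x \<notin> Mpq p q \<longrightarrow> A x = 0"
  shows "(\<lambda>U r. orbit_matrix p q A r U) ` Mpq p q = eval_on_orbit p q A ` restr V ` shift_maps p q"
proof -
  have "(\<lambda>U r. orbit_matrix p q A r U) ` Mpq p q
      = (\<lambda>(U1, U2). eval_on_orbit p q A (restr V (rshift U1 U2))) ` Mpq p q"
    using orbit_matrix_col[OF assms(2)] unfolding V_def by (intro image_cong) auto
  also have "\<dots> = eval_on_orbit p q A ` restr V ` shift_maps p q"
    by (auto simp: shift_maps_def)
  finally show ?thesis .
qed

lemma edim_birec_closure_eq_shift_alg:
  fixes A :: "word_pair \<Rightarrow> 'k::field"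
  assumes "\<forall>x. x \<notin> Mpq p q \<longrightarrow> A x = 0"
  shows "edim fscale (birec_closure p q A) = edim mscale (shift_alg p q (rec_closure p q A))"
proof -
  interpret E: Vector_Spaces.linear mscale fscale "eval_on_orbit p q A"
    by (rule linear_eval_on_orbit)
  have zero: "orbit_matrix p q A r U = 0"
    if "r \<notin> Mpq p q \<times> Mpq p q \<or> U \<notin> Mpq p q" for r U
    using that by (cases r) (auto simp: orbit_matrix_def hankel_def)
  have "edim fscale (birec_closure p q A)
      = edim fscale (orbit_matrix p q A ` (Mpq p q \<times> Mpq p q))"
    unfolding birec_closure_eq fs.edim_span orbit_matrix_rows[OF assms] ..
  also have "\<dots> = edim fscale ((\<lambda>U r. orbit_matrix p q A r U) ` Mpq p q)"
    using zero by (rule edim_rows_eq_edim_cols)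
  also have "\<dots> = edim mscale (restr (rec_closure p q A) ` shift_maps p q)"
    unfolding orbit_matrix_cols[OF assms]
    using inj_on_eval_on_orbit[of p q A] unfolding shift_alg_eq by (rule E.edim_image_eq)
  also have "\<dots> = edim mscale (shift_alg p q (rec_closure p q A))"
    unfolding shift_alg_eq ms.edim_span ..
  finally show ?thesis .
qed

theorem mainTheorem14:
  fixes p q :: nat and A :: "nat list \<times> nat list \<Rightarrow> 'k::field"
  assumes "\<forall>x. x \<notin> Mpq p q \<longrightarrow> A x = 0"
  shows "edim fscale (birec_closure p q A) = edim mscale (shift_alg p q (rec_closure p q A))
       \<and> edim fscale (rec_closure p q A) \<le> edim fscale (birec_closure p q A)
       \<and> edim fscale (birec_closure p q A) \<le> edim fscale (rec_closure p q A) * edim fscale (rec_closure p q A)"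
  using edim_birec_closure_eq_shift_alg[OF assms] edim_rec_closure_le_birec_closure
    edim_birec_closure_le_square[OF assms] by blast

end
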